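(* Let $k\ge 0$ and let $P_{4k+2}$ be the path with vertices labeled $1,2,\dots,4k+2$ consecutively. Then $\tau(P_{4k+2})=(k+1)^2$, and for each vertex $v$, writing $v=4q+r$ with $0\le r<4$, $$TDV(v)=\begin{cases}(k+1)q & \text{if } v\equiv 0 \pmod 4,\\ (k+1)(q+1) & \text{if } v\equiv 1 \pmod 4,\\ (k+1)(k+1-q) & \text{if } v\equiv 2 \pmod 4,\\ (k+1)(k-q) & \text{if } v\equiv 3 \pmod 4.\end{cases}$$
   Context: A set $D \subseteq V(G)$ is a total dominating set of a graph $G$ if every vertex of $G$ has a neighbor in $D$. $\gamma_t(G)$ is the minimum cardinality of a total dominating set; a minimum one is a $\gamma_t(G)$-set. $\tau(G)$ is the number of $\gamma_t(G)$-sets and $TDV(v)$ is the number of $\gamma_t(P_{4k+2})$-sets containing $v$. *)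

theory Defs
  imports Main
begin

definition path_vertices :: "nat \<Rightarrow> nat set" where
  "path_vertices n = {1..n}"

definition path_adj :: "nat \<Rightarrow> nat \<Rightarrow> bool" where
  "path_adj u v \<longleftrightarrow> u + 1 = v \<or> v + 1 = u"

definition is_total_dominating_set :: "'a set \<Rightarrow> ('a \<Rightarrow> 'a \<Rightarrow> bool) \<Rightarrow> 'a set \<Rightarrow> bool" where
  "is_total_dominating_set V E D \<longleftrightarrow> D \<subseteq> V \<and> (\<forall>v\<in>V. \<exists>u\<in>D. E v u)"

definition total_domination_number :: "'a set \<Rightarrow> ('a \<Rightarrow> 'a \<Rightarrow> bool) \<Rightarrow> nat" where
  "total_domination_number V E = (LEAST m. \<exists>D. is_total_dominating_set V E D \<and> card D = m)"

definition gamma_t_sets :: "'a set \<Rightarrow> ('a \<Rightarrow> 'a \<Rightarrow> bool) \<Rightarrow> 'a set set" where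
  "gamma_t_sets V E = {D. is_total_dominating_set V E D \<and> card D = total_domination_number V E}"

definition tau :: "'a set \<Rightarrow> ('a \<Rightarrow> 'a \<Rightarrow> bool) \<Rightarrow> nat" where
  "tau V E = card (gamma_t_sets V E)"

definition TDV :: "'a set \<Rightarrow> ('a \<Rightarrow> 'a \<Rightarrow> bool) \<Rightarrow> 'a \<Rightarrow> nat" where
  "TDV V E v = card {D \<in> gamma_t_sets V E. v \<in> D}"

end

theory Submission
  imports Defs
begin

text \<open>In the path on 4k+2 vertices the open neighbourhoods of the vertices 4m+1 and 4m+2
  (m \<le> k) are the 2k+2 pairwise disjoint pairs {4m, 4m+2} and {4m+1, 4m+3}, so the total
  domination number is 2k+2 and a minimum total dominating set contains exactly one vertex of
  each pair. The remaining neighbourhoods {4m+2, 4m+4} and {4m+3, 4m+5} force these choices to be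
  monotone in m: the chosen vertices 4m+2 are those with m \<le> p, the chosen vertices 4m+1 those
  with m \<ge> t. Thus the minimum total dominating sets correspond bijectively to the pairs
  (p, t) with p, t \<le> k, and TDV(v) is the number of pairs whose set contains v.\<close>

lemma nat_mod4_cases:
  fixes v :: nat
  obtains q where "v = 4*q" | q where "v = 4*q+1" | q where "v = 4*q+2" | q where "v = 4*q+3"
proof -
  have "v = 4 * (v div 4) + v mod 4" and "v mod 4 < 4" by simp_all
  then consider "v = 4 * (v div 4)" | "v = 4 * (v div 4) + 1" | "v = 4 * (v div 4) + 2"
    | "v = 4 * (v div 4) + 3"
    by linarith
  then show ?thesis using that by cases
qed

lemma threshold_upward:
  fixes P :: "nat \<Rightarrow> bool"
  assumes "P k" and succ: "\<And>m. m < k \<Longrightarrow> P m \<Longrightarrow> P (Suc m)"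
  obtains t where "t \<le> k" and "\<And>m. m \<le> k \<Longrightarrow> P m \<longleftrightarrow> t \<le> m"
proof
  let ?t = "LEAST m. P m"
  show "?t \<le> k" using \<open>P k\<close> by (rule Least_le)
  fix m assume "m \<le> k"
  show "P m \<longleftrightarrow> ?t \<le> m"
  proof
    assume "?t \<le> m"
    then show "P m"
    proof (induction rule: dec_induct)
      case base
      show ?case using \<open>P k\<close> by (rule LeastI)
    next
      case (step n)
      with \<open>m \<le> k\<close> show ?case by (intro succ) simp_all
    qed
  qed (rule Least_le)
qed

lemma threshold_downward:
  fixes P :: "nat \<Rightarrow> bool"
  assumes "P 0" and succ: "\<And>m. m < k \<Longrightarrow> \<not> P m \<Longrightarrow> \<not> P (Suc m)"
  obtains p where "p \<le> k" and "\<And>m. m \<le> k \<Longrightarrow> P m \<longleftrightarrow> m \<le> p"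
proof -
  have "P (k - Suc m)" if "m < k" "P (k - m)" for m
  proof -
    have "Suc (k - Suc m) = k - m" "k - Suc m < k" using \<open>m < k\<close> by simp_all
    then show ?thesis using succ[of "k - Suc m"] \<open>P (k - m)\<close> by auto
  qed
  moreover have "P (k - k)" using \<open>P 0\<close> by simp
  ultimately obtain t where "t \<le> k" and t: "\<And>m. m \<le> k \<Longrightarrow> P (k - m) \<longleftrightarrow> t \<le> m"
    using threshold_upward[of "\<lambda>m. P (k - m)"] by blast
  have "P m \<longleftrightarrow> m \<le> k - t" if "m \<le> k" for m
    using t[of "k - m"] that \<open>t \<le> k\<close> by auto
  then show ?thesis using that[of "k - t"] by simp
qed

lemma card_filter_image:
  assumes "inj_on f A"
  shows "card {y \<in> f ` A. P y} = card {x \<in> A. P (f x)}"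
proof -
  have "{y \<in> f ` A. P y} = f ` {x \<in> A. P (f x)}" by auto
  moreover have "inj_on f {x \<in> A. P (f x)}" using assms by (rule inj_on_subset) auto
  ultimately show ?thesis by (simp add: card_image)
qed

lemma is_total_dominating_set_path_iff:
  "is_total_dominating_set {1..n} path_adj D \<longleftrightarrow> D \<subseteq> {1..n} \<and> (\<forall>a<n. a \<in> D \<or> a + 2 \<in> D)"
proof -
  have neighbours: "(\<exists>u\<in>D. path_adj (a + 1) u) \<longleftrightarrow> a \<in> D \<or> a + 2 \<in> D" for a
    unfolding path_adj_def by force
  have shift: "(\<forall>v\<in>{1..n}. P v) \<longleftrightarrow> (\<forall>a<n. P (a + 1))" for P :: "nat \<Rightarrow> bool"
    by (metis Suc_eq_plus1 Suc_le_eq Suc_pred atLeastAtMost_iff le_add2 not_gr0 not_one_le_zero)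
  show ?thesis
    unfolding is_total_dominating_set_def shift neighbours ..
qed

text \<open>Collapses each of the pairs {4m, 4m+2} and {4m+1, 4m+3} to a single point.\<close>

definition block_index :: "nat \<Rightarrow> nat \<times> nat" where
  "block_index v = (v mod 2, v div 4)"

lemma block_index_image:
  assumes "is_total_dominating_set {1..4*k+2} path_adj D"
  shows "block_index ` D = {0,1} \<times> {..k}"
proof
  have sub: "D \<subseteq> {1..4*k+2}" and cover: "\<And>a. a < 4*k+2 \<Longrightarrow> a \<in> D \<or> a + 2 \<in> D"
    using assms unfolding is_total_dominating_set_path_iff by auto
  show "block_index ` D \<subseteq> {0,1} \<times> {..k}"
    using sub by (force simp: block_index_def)
  show "{0,1} \<times> {..k} \<subseteq> block_index ` D"
  proof clarify
    fix b m :: nat assume "b \<in> {0,1}" "m \<le> k"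
    then have "4*m + b \<in> D \<or> 4*m + b + 2 \<in> D" and "block_index (4*m + b) = (b, m)"
      and "block_index (4*m + b + 2) = (b, m)"
      using cover[of "4*m + b"] by (auto simp: block_index_def mod_Suc div_Suc)
    then show "(b, m) \<in> block_index ` D" by (metis image_eqI)
  qed
qed

lemma card_block_index_range: "card ({0::nat,1} \<times> {..k::nat}) = 2*k+2"
  by (simp add: card_cartesian_product)

lemma card_tds_path_ge:
  assumes "is_total_dominating_set {1..4*k+2} path_adj D"
  shows "2*k+2 \<le> card D"
proof -
  have "finite D"
    using assms unfolding is_total_dominating_set_def by (meson finite_atLeastAtMost finite_subset)
  then have "card (block_index ` D) \<le> card D" by (rule card_image_le)
  then show ?thesis using block_index_image[OF assms] card_block_index_range by simp
qed

definition path_min_tds :: "nat \<Rightarrow> nat \<Rightarrow> nat \<Rightarrow> nat set" where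
  "path_min_tds k p t = {v. v mod 4 = 2 \<and> v div 4 \<le> p \<or> v mod 4 = 0 \<and> p < v div 4 \<and> v div 4 \<le> k
     \<or> v mod 4 = 3 \<and> v div 4 < t \<or> v mod 4 = 1 \<and> t \<le> v div 4 \<and> v div 4 \<le> k}"

lemma mem_path_min_tds:
  "4*q \<in> path_min_tds k p t \<longleftrightarrow> p < q \<and> q \<le> k"
  "4*q+1 \<in> path_min_tds k p t \<longleftrightarrow> t \<le> q \<and> q \<le> k"
  "4*q+2 \<in> path_min_tds k p t \<longleftrightarrow> q \<le> p"
  "4*q+3 \<in> path_min_tds k p t \<longleftrightarrow> q < t"
  by (simp_all add: path_min_tds_def mod_Suc div_Suc)

lemma is_total_dominating_set_path_min_tds:
  assumes "p \<le> k" "t \<le> k"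
  shows "is_total_dominating_set {1..4*k+2} path_adj (path_min_tds k p t)"
  unfolding is_total_dominating_set_path_iff
proof (intro conjI allI impI subsetI)
  fix v assume "v \<in> path_min_tds k p t"
  then show "v \<in> {1..4*k+2}"
    using assms by (cases v rule: nat_mod4_cases) (auto simp: path_min_tds_def mod_Suc div_Suc)
next
  fix a assume "a < 4*k+2"
  then show "a \<in> path_min_tds k p t \<or> a + 2 \<in> path_min_tds k p t"
    by (cases a rule: nat_mod4_cases) (auto simp: path_min_tds_def mod_Suc div_Suc)
qed

lemma card_path_min_tds:
  assumes "p \<le> k" "t \<le> k"
  shows "card (path_min_tds k p t) = 2*k+2"
proof -
  have "inj_on block_index (path_min_tds k p t)"
  proof (rule inj_onI)
    fix u v assume "u \<in> path_min_tds k p t" "v \<in> path_min_tds k p t" "block_index u = block_index v"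
    then show "u = v"
      by (cases u rule: nat_mod4_cases; cases v rule: nat_mod4_cases)
        (auto simp: block_index_def path_min_tds_def mod_Suc div_Suc)
  qed
  then show ?thesis
    using block_index_image[OF is_total_dominating_set_path_min_tds[OF assms]]
    by (metis card_image card_block_index_range)
qed

lemma min_tds_path_one_per_block:
  assumes tds: "is_total_dominating_set {1..4*k+2} path_adj D" and card: "card D = 2*k+2"
  shows "\<not> (4*m \<in> D \<and> 4*m + 2 \<in> D)" and "\<not> (4*m + 1 \<in> D \<and> 4*m + 3 \<in> D)"
proof -
  have "finite D"
    using tds unfolding is_total_dominating_set_def by (meson finite_atLeastAtMost finite_subset)
  then have inj: "inj_on block_index D"
    using block_index_image[OF tds] card card_block_index_range by (metis eq_card_imp_inj_on)
  have "block_index (4*m) = block_index (4*m + 2)"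
    by (simp add: block_index_def mod_Suc div_Suc)
  then show "\<not> (4*m \<in> D \<and> 4*m + 2 \<in> D)" using inj by (auto dest: inj_onD)
  have "block_index (4*m + 1) = block_index (4*m + 3)"
    by (simp add: block_index_def mod_Suc div_Suc numeral_3_eq_3)
  then show "\<not> (4*m + 1 \<in> D \<and> 4*m + 3 \<in> D)" using inj by (auto dest: inj_onD)
qed

lemma min_tds_path_cases:
  assumes tds: "is_total_dominating_set {1..4*k+2} path_adj D" and card: "card D = 2*k+2"
  obtains p t where "p \<le> k" "t \<le> k" "D = path_min_tds k p t"
proof -
  have sub: "D \<subseteq> {1..4*k+2}"
    and cover: "\<And>a b. a < 4*k+2 \<Longrightarrow> b = a + 2 \<Longrightarrow> a \<in> D \<or> b \<in> D"
    using tds unfolding is_total_dominating_set_path_iff by auto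
  have exclusive_even: "\<not> (4*m \<in> D \<and> 4*m + 2 \<in> D)"
    and exclusive_odd: "\<not> (4*m + 1 \<in> D \<and> 4*m + 3 \<in> D)" for m
    using min_tds_path_one_per_block[OF tds card] by blast+
  have "4*0 + 2 \<in> D" using cover[of 0 "4*0 + 2"] sub by auto
  moreover have "4 * Suc m + 2 \<notin> D" if "m < k" "4*m + 2 \<notin> D" for m
    using that cover[of "4*m + 2" "4 * Suc m"] exclusive_even[of "Suc m"] by simp
  ultimately obtain p where "p \<le> k" and p: "\<And>m. m \<le> k \<Longrightarrow> 4*m + 2 \<in> D \<longleftrightarrow> m \<le> p"
    using threshold_downward[of "\<lambda>m. 4*m + 2 \<in> D"] by blast
  have "4*k + 1 \<in> D" using cover[of "4*k + 1" "4*k + 3"] sub by auto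
  moreover have "4 * Suc m + 1 \<in> D" if "m < k" "4*m + 1 \<in> D" for m
    using that cover[of "4*m + 3" "4 * Suc m + 1"] exclusive_odd[of m] by simp
  ultimately obtain t where "t \<le> k" and t: "\<And>m. m \<le> k \<Longrightarrow> 4*m + 1 \<in> D \<longleftrightarrow> t \<le> m"
    using threshold_upward[of "\<lambda>m. 4*m + 1 \<in> D"] by blast
  have "v \<in> D \<longleftrightarrow> v \<in> path_min_tds k p t" if "v \<in> {1..4*k+2}" for v
  proof (cases v rule: nat_mod4_cases)
    case (1 q)
    with that have "q \<le> k" by auto
    then have "4*q \<in> D \<longleftrightarrow> 4*q + 2 \<notin> D"
      using cover[of "4*q" "4*q + 2"] exclusive_even[of q] by auto
    then show ?thesis using 1 \<open>q \<le> k\<close> p[of q] mem_path_min_tds(1) by auto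
  next
    case (2 q)
    then show ?thesis using that t[of q] mem_path_min_tds(2) by auto
  next
    case (3 q)
    then show ?thesis using that p[of q] mem_path_min_tds(3) by auto
  next
    case (4 q)
    with that have "q \<le> k" by auto
    then have "4*q + 3 \<in> D \<longleftrightarrow> 4*q + 1 \<notin> D"
      using cover[of "4*q + 1" "4*q + 3"] exclusive_odd[of q] by auto
    then show ?thesis using 4 \<open>q \<le> k\<close> t[of q] mem_path_min_tds(4) by auto
  qed
  moreover have "path_min_tds k p t \<subseteq> {1..4*k+2}"
    using is_total_dominating_set_path_min_tds[OF \<open>p \<le> k\<close> \<open>t \<le> k\<close>]
    unfolding is_total_dominating_set_def by blast
  ultimately have "D = path_min_tds k p t" using sub by blast
  then show ?thesis using that \<open>p \<le> k\<close> \<open>t \<le> k\<close> by blast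
qed

lemma total_domination_number_path: "total_domination_number {1..4*k+2} path_adj = 2*k+2"
  unfolding total_domination_number_def
proof (rule Least_equality)
  show "\<exists>D. is_total_dominating_set {1..4*k+2} path_adj D \<and> card D = 2*k+2"
    using is_total_dominating_set_path_min_tds[of 0 k 0] card_path_min_tds[of 0 k 0] by auto
qed (use card_tds_path_ge in blast)

lemma gamma_t_sets_path:
  "gamma_t_sets {1..4*k+2} path_adj = (\<lambda>(p, t). path_min_tds k p t) ` ({..k} \<times> {..k})"
proof (intro equalityI subsetI)
  fix D assume "D \<in> gamma_t_sets {1..4*k+2} path_adj"
  then have "is_total_dominating_set {1..4*k+2} path_adj D" "card D = 2*k+2"
    unfolding gamma_t_sets_def total_domination_number_path by auto
  then obtain p t where "p \<le> k" "t \<le> k" "D = path_min_tds k p t"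
    by (rule min_tds_path_cases)
  then show "D \<in> (\<lambda>(p, t). path_min_tds k p t) ` ({..k} \<times> {..k})" by auto
next
  fix D assume "D \<in> (\<lambda>(p, t). path_min_tds k p t) ` ({..k} \<times> {..k})"
  then show "D \<in> gamma_t_sets {1..4*k+2} path_adj"
    using is_total_dominating_set_path_min_tds card_path_min_tds
    unfolding gamma_t_sets_def total_domination_number_path by auto
qed

lemma inj_on_path_min_tds: "inj_on (\<lambda>(p, t). path_min_tds k p t) ({..k} \<times> {..k})"
proof (rule inj_onI, clarsimp)
  fix p t p' t' assume "p \<le> k" "t \<le> k" "p' \<le> k" "t' \<le> k"
    and eq: "path_min_tds k p t = path_min_tds k p' t'"
  have "m \<le> p \<longleftrightarrow> m \<le> p'" for m
    using eq mem_path_min_tds(3)[of m k] by metis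
  moreover have "t \<le> m \<longleftrightarrow> t' \<le> m" if "m \<le> k" for m
    using eq mem_path_min_tds(2)[of m k] that by metis
  ultimately show "p = p' \<and> t = t'"
    using \<open>t \<le> k\<close> \<open>t' \<le> k\<close> by (metis le_antisym order_refl)
qed

lemma card_path_min_tds_params_containing:
  assumes "v \<in> {1..4*k+2}"
  shows "card {(p, t) \<in> {..k} \<times> {..k}. v \<in> path_min_tds k p t} =
    (let q = v div 4 in
      if v mod 4 = 0 then (k+1)*q
      else if v mod 4 = 1 then (k+1)*(q+1)
      else if v mod 4 = 2 then (k+1)*(k+1-q)
      else (k+1)*(k-q))"
proof (cases v rule: nat_mod4_cases)
  case (1 q)
  with assms have "{(p, t) \<in> {..k} \<times> {..k}. v \<in> path_min_tds k p t} = {..<q} \<times> {..k}"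
    using mem_path_min_tds(1) by auto
  with 1 show ?thesis by (simp add: card_cartesian_product Let_def mod_Suc div_Suc)
next
  case (2 q)
  with assms have "{(p, t) \<in> {..k} \<times> {..k}. v \<in> path_min_tds k p t} = {..k} \<times> {..q}"
    using mem_path_min_tds(2) by auto
  with 2 show ?thesis by (simp add: card_cartesian_product Let_def mod_Suc div_Suc)
next
  case (3 q)
  with assms have "{(p, t) \<in> {..k} \<times> {..k}. v \<in> path_min_tds k p t} = {q..k} \<times> {..k}"
    using mem_path_min_tds(3) by auto
  with 3 show ?thesis by (simp add: card_cartesian_product Let_def mod_Suc div_Suc)
next
  case (4 q)
  with assms have "{(p, t) \<in> {..k} \<times> {..k}. v \<in> path_min_tds k p t} = {..k} \<times> {q<..k}"
    using mem_path_min_tds(4) by auto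
  with 4 show ?thesis by (simp add: card_cartesian_product Let_def mod_Suc div_Suc)
qed

theorem proposition5p4:
  fixes k :: nat
  shows "tau (path_vertices (4*k+2)) path_adj = (k+1)^2 \<and>
    (\<forall>v\<in>path_vertices (4*k+2).
      TDV (path_vertices (4*k+2)) path_adj v =
        (let q = v div 4 in
          if v mod 4 = 0 then (k+1)*q
          else if v mod 4 = 1 then (k+1)*(q+1)
          else if v mod 4 = 2 then (k+1)*(k+1-q)
          else (k+1)*(k-q)))"
proof -
  have gamma: "gamma_t_sets (path_vertices (4*k+2)) path_adj
      = (\<lambda>(p, t). path_min_tds k p t) ` ({..k} \<times> {..k})"
    unfolding path_vertices_def by (rule gamma_t_sets_path)
  have "tau (path_vertices (4*k+2)) path_adj = (k+1)^2"
    unfolding tau_def gamma card_image[OF inj_on_path_min_tds]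
    by (simp add: card_cartesian_product power2_eq_square)
  moreover have "TDV (path_vertices (4*k+2)) path_adj v
      = card {(p, t) \<in> {..k} \<times> {..k}. v \<in> path_min_tds k p t}" for v
    unfolding TDV_def gamma card_filter_image[OF inj_on_path_min_tds]
    by (rule arg_cong[where f = card]) auto
  ultimately show ?thesis
    using card_path_min_tds_params_containing unfolding path_vertices_def by simp
qed

end
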